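(* For every integer $k\ge2$, in the setting of the context, $\lim_{p\to\infty}\gamma_p(k)=\frac{12}{k}$.
   Context: For integers $k\ge2$, $n\ge1$ and $x\in\mathbb R$: $P_{n,k}(x)=\left(1+\frac{x^{n-1}}{2}\right)^{k+1}-\left(1-\frac{x^{n-1}}{2}\right)^{k+1}$, and for $n>k$: $Q_{n,k}(x)=(k+1)x^{n-k}$. Fix an integer $k\ge2$ and, for each integer $n>k$, an arbitrary $\xi(k;n)\in(0,1)$ with $P_{n,k}(\xi(k;n))=Q_{n,k}(\xi(k;n))$. Let $\alpha=\limsup_{n\to\infty}\xi(k;n)^{n-1}$ and let $(n_p)_{p\in\mathbb N}$ be a strictly increasing sequence of integers $>k$ with $\xi(k;n_p)^{n_p-1}\to\alpha$. For $n>k$ put $$C_n(k)=\frac{\xi(k;n)^{3n-k-2}}{\frac{1}{k+2}\left[\left(1+\frac{\xi(k;n)^{n-1}}{2}\right)^{k+2}-\left(1-\frac{\xi(k;n)^{n-1}}{2}\right)^{k+2}\right]-\xi(k;n)^{n-k}},$$ and $\gamma_p(k)=C_{n_p}(k)$ for $p\in\mathbb N$. *)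

theory Defs
  imports "HOL-Analysis.Analysis"
begin

definition P_poly :: "nat \<Rightarrow> nat \<Rightarrow> real \<Rightarrow> real" where
  "P_poly n k x = (1 + x ^ (n - 1) / 2) ^ (k + 1) - (1 - x ^ (n - 1) / 2) ^ (k + 1)"

definition Q_poly :: "nat \<Rightarrow> nat \<Rightarrow> real \<Rightarrow> real" where
  "Q_poly n k x = real (k + 1) * x ^ (n - k)"

text \<open>C n k evaluated at the chosen root x = xi(k;n).\<close>
definition C_const :: "nat \<Rightarrow> nat \<Rightarrow> real \<Rightarrow> real" where
  "C_const n k x = x ^ (3 * n - k - 2) /
     ((1 / real (k + 2)) * ((1 + x ^ (n - 1) / 2) ^ (k + 2) - (1 - x ^ (n - 1) / 2) ^ (k + 2))
      - x ^ (n - k))"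

end

theory Submission
  imports Defs
begin

text \<open>
  Write y = xi(n)^(n-1) and z = xi(n)^(n-k).  With the odd binomial difference
  D m y = (1 + y/2)^m - (1 - y/2)^m the root equation reads D (k+1) y = (k+1) z, and
  the constant C_n(k) becomes a function of y alone:
    C_n(k) = (D (k+1) y / y) / ((k+1) * E y / y^3),
  where E y = D (k+2) y / (k+2) - D (k+1) y / (k+1).  Expanding binomially,
  D m y = m y + O(y^3) and E y = k/12 y^3 + O(y^5), so this profile tends to 12/k as y -> 0.

  Hence alpha = 0, and along the subsequence n_p the constants converge to 12/k.
\<close>

lemma real_choose_three: "real (n choose 3) = real n * (real n - 1) * (real n - 2) / 6"
  by (simp add: binomial_gbinomial gbinomial_pochhammer' pochhammer_Suc_prod numeral_3_eq_3
      field_simps)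

lemma odd_binomial_difference:
  fixes u :: "'a::comm_ring_1"
  shows "(1 + u)^m - (1 - u)^m = (\<Sum>i\<le>m. of_nat (m choose i) * (1 - (-1)^i) * u^i)"
proof -
  have "(1 + u)^m = (\<Sum>i\<le>m. of_nat (m choose i) * u^i)"
    using binomial_ring[of u 1 m] by (simp add: add.commute)
  moreover have "(1 - u)^m = (\<Sum>i\<le>m. of_nat (m choose i) * (-1)^i * u^i)"
    using binomial_ring[of "-u" 1 m] by (simp add: power_minus' add.commute mult.assoc)
  ultimately show ?thesis
    by (simp add: sum_subtractf[symmetric] algebra_simps)
qed

lemma tendsto_poly_div_power_at_0:
  fixes a :: "nat \<Rightarrow> 'a::real_normed_field"
  assumes low: "\<And>i. i < j \<Longrightarrow> a i = 0" and "j \<le> N"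
  shows "((\<lambda>y. (\<Sum>i\<le>N. a i * y^i) / y^j) \<longlongrightarrow> a j) (at 0)"
proof -
  have shifted: "(\<Sum>i\<le>N. a i * y^i) / y^j = (\<Sum>i\<in>{j..N}. a i * y^(i-j))" if "y \<noteq> 0" for y
  proof -
    have "(\<Sum>i\<le>N. a i * y^i) = (\<Sum>i\<in>{j..N}. a i * y^i)"
      by (rule sum.mono_neutral_right) (auto simp: low)
    also have "\<dots> / y^j = (\<Sum>i\<in>{j..N}. a i * y^(i-j))"
      unfolding sum_divide_distrib by (rule sum.cong) (auto simp: power_diff that)
    finally show ?thesis .
  qed
  have "(\<Sum>i\<in>{j..N}. a i * 0^(i-j)) = (\<Sum>i\<in>{j}. a i * 0^(i-j))"
    by (rule sum.mono_neutral_right) (use \<open>j \<le> N\<close> in auto)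
  moreover have "((\<lambda>y. \<Sum>i\<in>{j..N}. a i * y^(i-j)) \<longlongrightarrow> (\<Sum>i\<in>{j..N}. a i * 0^(i-j))) (at 0)"
    by (intro tendsto_intros)
  ultimately have "((\<lambda>y. \<Sum>i\<in>{j..N}. a i * y^(i-j)) \<longlongrightarrow> a j) (at 0)"
    by simp
  then show ?thesis
    by (rule Lim_transform_eventually) (simp add: eventually_at_filter shifted)
qed

definition half_diff :: "nat \<Rightarrow> real \<Rightarrow> real" where
  "half_diff m y = (1 + y/2)^m - (1 - y/2)^m"

definition half_diff_coeff :: "nat \<Rightarrow> nat \<Rightarrow> real" where
  "half_diff_coeff m i = real (m choose i) * (1 - (-1)^i) / 2^i"

lemma half_diff_sum:
  assumes "m \<le> N"
  shows "half_diff m y = (\<Sum>i\<le>N. half_diff_coeff m i * y^i)"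
proof -
  have "half_diff m y = (\<Sum>i\<le>m. half_diff_coeff m i * y^i)"
    unfolding half_diff_def half_diff_coeff_def odd_binomial_difference
    by (rule sum.cong) (auto simp: power_divide)
  also have "\<dots> = (\<Sum>i\<le>N. half_diff_coeff m i * y^i)"
    by (rule sum.mono_neutral_left) (use assms in \<open>auto simp: half_diff_coeff_def\<close>)
  finally show ?thesis .
qed

lemma half_diff_linear_limit:
  assumes "1 \<le> m"
  shows "((\<lambda>y. half_diff m y / y) \<longlongrightarrow> real m) (at 0)"
proof -
  have "((\<lambda>y. (\<Sum>i\<le>m. half_diff_coeff m i * y^i) / y^1) \<longlongrightarrow> half_diff_coeff m 1) (at 0)"
    by (rule tendsto_poly_div_power_at_0) (use assms in \<open>auto simp: half_diff_coeff_def\<close>)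
  then show ?thesis
    by (simp add: half_diff_sum[OF order.refl] half_diff_coeff_def)
qed

text \<open>For y >= 0 all coefficients are nonnegative; keeping the linear and cubic terms
  gives a lower bound.\<close>
lemma half_diff_lower:
  assumes "3 \<le> m" and "0 \<le> y"
  shows "real m * y + y^3/4 \<le> half_diff m y"
proof -
  let ?t = "\<lambda>i. half_diff_coeff m i * y^i"
  have nonneg: "0 \<le> ?t i" for i
  proof -
    have "(0::real) \<le> 1 - (-1)^i" by (cases "even i") auto
    then show ?thesis using assms by (simp add: half_diff_coeff_def)
  qed
  have "1 \<le> real (m choose 3)"
    using assms(1) by (simp add: Suc_le_eq)
  then have "1 * y^3 \<le> real (m choose 3) * y^3"
    using assms(2) by (intro mult_right_mono) auto
  then have "y^3/4 \<le> ?t 3"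
    by (simp add: half_diff_coeff_def)
  moreover have "?t 1 = real m * y"
    by (simp add: half_diff_coeff_def)
  moreover have "?t 1 + ?t 3 \<le> (\<Sum>i\<le>m. ?t i)"
    using sum_mono2[of "{..m}" "{1,3}" ?t] assms(1) nonneg by auto
  ultimately show ?thesis
    using half_diff_sum[OF order.refl, of m y] by linarith
qed

text \<open>The cubic defect E, the denominator of C_n(k) after the root equation is used.
  Its linear terms cancel, so it is of order y^3.\<close>
definition cubic_defect :: "nat \<Rightarrow> real \<Rightarrow> real" where
  "cubic_defect k y = half_diff (k+2) y / real (k+2) - half_diff (k+1) y / real (k+1)"

definition cubic_defect_coeff :: "nat \<Rightarrow> nat \<Rightarrow> real" where
  "cubic_defect_coeff k i =
     half_diff_coeff (k+2) i / real (k+2) - half_diff_coeff (k+1) i / real (k+1)"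

lemma cubic_defect_sum:
  "cubic_defect k y = (\<Sum>i\<le>k+2. cubic_defect_coeff k i * y^i)"
proof -
  have high: "half_diff (k+2) y = (\<Sum>i\<le>k+2. half_diff_coeff (k+2) i * y^i)"
    and low: "half_diff (k+1) y = (\<Sum>i\<le>k+2. half_diff_coeff (k+1) i * y^i)"
    by (rule half_diff_sum, simp)+
  show ?thesis
    unfolding cubic_defect_def cubic_defect_coeff_def high low
      sum_divide_distrib sum_subtractf[symmetric]
    by (rule sum.cong) (simp_all add: left_diff_distrib)
qed

lemma cubic_defect_coeff_3: "cubic_defect_coeff k 3 = real k / 12"
proof -
  have high: "real (k+2 choose 3) / real (k+2) = (real k + 1) * real k / 6"
    by (simp add: real_choose_three field_simps)
  have low: "real (k+1 choose 3) / real (k+1) = real k * (real k - 1) / 6"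
    by (simp add: real_choose_three field_simps)
  have cubic: "half_diff_coeff m 3 / real m = (real (m choose 3) / real m) / 4" for m
    by (simp add: half_diff_coeff_def)
  have "cubic_defect_coeff k 3
      = (real (k+2 choose 3) / real (k+2) - real (k+1 choose 3) / real (k+1)) / 4"
    unfolding cubic_defect_coeff_def cubic by (simp add: diff_divide_distrib)
  also have "\<dots> = real k / 12"
    unfolding high low by (simp add: field_simps)
  finally show ?thesis .
qed

lemma cubic_defect_limit:
  assumes "1 \<le> k"
  shows "((\<lambda>y. cubic_defect k y / y^3) \<longlongrightarrow> real k / 12) (at 0)"
proof -
  have "cubic_defect_coeff k i = 0" if "i < 3" for i
  proof -
    have "i = 0 \<or> i = 1 \<or> i = 2"
      using that by auto
    then show ?thesis
      by (auto simp: cubic_defect_coeff_def half_diff_coeff_def field_simps)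
  qed
  then have "((\<lambda>y. (\<Sum>i\<le>k+2. cubic_defect_coeff k i * y^i) / y^3)
      \<longlongrightarrow> cubic_defect_coeff k 3) (at 0)"
    using assms by (intro tendsto_poly_div_power_at_0) auto
  then show ?thesis
    by (simp add: cubic_defect_sum cubic_defect_coeff_3)
qed

definition C_profile :: "nat \<Rightarrow> real \<Rightarrow> real" where
  "C_profile k y = (half_diff (k+1) y / y) / (real (k+1) * (cubic_defect k y / y^3))"

lemma C_profile_limit:
  assumes "1 \<le> k"
  shows "(C_profile k \<longlongrightarrow> 12 / real k) (at 0)"
proof -
  have "(C_profile k \<longlongrightarrow> real (k+1) / (real (k+1) * (real k / 12))) (at 0)"
    unfolding C_profile_def[abs_def] using assms
    by (intro tendsto_intros half_diff_linear_limit cubic_defect_limit) auto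
  moreover have "real (k+1) / (real (k+1) * (real k / 12)) = 1 / (real k / 12)"
    by (rule nonzero_divide_mult_cancel_left) simp
  ultimately show ?thesis
    by simp
qed

lemma P_poly_eq_half_diff: "P_poly n k x = half_diff (k+1) (x^(n-1))"
  by (simp add: P_poly_def half_diff_def)

lemma C_const_eq_profile:
  assumes "k < n" and "0 < x" and root: "P_poly n k x = Q_poly n k x"
  shows "C_const n k x = C_profile k (x^(n-1))"
proof -
  define y where "y = x^(n-1)"
  define z where "z = x^(n-k)"
  have "y \<noteq> 0"
    using assms(2) by (simp add: y_def)
  have D: "half_diff (k+1) y = real (k+1) * z"
    using root by (simp add: P_poly_eq_half_diff Q_poly_def y_def z_def)
  have numerator: "x^(3*n-k-2) = y^2 * z"
  proof -
    have "3*n-k-2 = (n-1)*2 + (n-k)"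
      using assms(1) by simp
    then show ?thesis
      by (simp add: y_def z_def power_add power_mult)
  qed
  have E: "cubic_defect k y
      = (1 / real (k+2)) * ((1 + y/2)^(k+2) - (1 - y/2)^(k+2)) - z"
    unfolding cubic_defect_def D by (simp add: half_diff_def)
  have "C_const n k x = y^2 * z / cubic_defect k y"
    unfolding C_const_def numerator E by (simp add: y_def z_def)
  also have "\<dots> = z / y / (cubic_defect k y / y^3)"
    using \<open>y \<noteq> 0\<close>
    by (cases "cubic_defect k y = 0") (simp_all add: field_simps power2_eq_square power3_eq_cube)
  also have "\<dots> = C_profile k y"
    unfolding C_profile_def D by simp
  finally show ?thesis
    by (simp add: y_def)
qed

text \<open>The key estimate: for a root x in (0,1) and y = x^(n-1), t = x^(k-1), the root
  equation together with the lower bound for D gives y^2 t / 4 <= (k+1)(1 - t); since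
  y <= t this yields t <= 1 - y^3/(4(k+1)), and y^(k-1) = t^(n-1).\<close>
lemma root_power_bound:
  assumes "2 \<le> k" and "k < n" and "0 < x" and "x < 1"
    and root: "P_poly n k x = Q_poly n k x"
  shows "(x^(n-1))^(k-1) \<le> (1 - (x^(n-1))^3 / (4 * real (k+1)))^(n-1)"
proof -
  define y where "y = x^(n-1)"
  define z where "z = x^(n-k)"
  define t where "t = x^(k-1)"
  have pos: "0 < y" "0 < t"
    using assms(3) by (simp_all add: y_def t_def)
  have "y = z * t"
    using assms(1,2) by (simp add: y_def z_def t_def power_add[symmetric])
  have "y \<le> t"
    using assms by (simp add: y_def t_def power_decreasing)
  have "real (k+1) * y + y^3/4 \<le> real (k+1) * z"
    using half_diff_lower[of "k+1" y] assms(1) pos root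
    by (simp add: P_poly_eq_half_diff Q_poly_def y_def z_def)
  then have "(real (k+1) * y + y^3/4) * t \<le> real (k+1) * y"
    using pos \<open>y = z * t\<close> by (simp add: mult_right_mono mult.assoc)
  then have "y * (y^2 * t / 4) \<le> y * (real (k+1) * (1 - t))"
    by (simp add: power2_eq_square power3_eq_cube algebra_simps)
  then have "y^2 * t / 4 \<le> real (k+1) * (1 - t)"
    using pos mult_le_cancel_left_pos by blast
  moreover have "y^3 \<le> y^2 * t"
    using \<open>y \<le> t\<close> pos by (simp add: power3_eq_cube power2_eq_square)
  ultimately have t_bound: "t \<le> 1 - y^3 / (4 * real (k+1))"
    by (simp add: field_simps)
  have "y^(k-1) = t^(n-1)"
    by (simp add: y_def t_def power_mult[symmetric] mult.commute)
  also have "\<dots> \<le> (1 - y^3 / (4 * real (k+1)))^(n-1)"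
    using t_bound pos by (simp add: power_mono)
  finally show ?thesis
    by (simp add: y_def)
qed

text \<open>Consequently xi(n)^(n-1) tends to 0 along the whole sequence: if it stayed above
  some e > 0, the bound would force e^(k-1) <= (1 - e^3/(4(k+1)))^(n-1) -> 0.\<close>
lemma root_power_tendsto_zero:
  fixes xi :: "nat \<Rightarrow> real"
  assumes "2 \<le> k"
    and roots: "\<And>n. k < n \<Longrightarrow> 0 < xi n \<and> xi n < 1 \<and> P_poly n k (xi n) = Q_poly n k (xi n)"
  shows "(\<lambda>n. xi n ^ (n-1)) \<longlonglongrightarrow> 0"
proof (rule order_tendstoI)
  fix a :: real
  assume "a < 0"
  show "\<forall>\<^sub>F n in sequentially. a < xi n ^ (n-1)"
    using eventually_gt_at_top[of k]
    by eventually_elim (use roots \<open>a < 0\<close> in \<open>smt (verit) zero_less_power\<close>)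
next
  fix a :: real
  assume "0 < a"
  define e where "e = min a 1"
  define d where "d = e^3 / (4 * real (k+1))"
  have e: "0 < e" "e \<le> 1" "e \<le> a"
    using \<open>0 < a\<close> by (simp_all add: e_def)
  have "e^3 \<le> 1"
    using e by (simp add: power_le_one)
  then have d: "0 < d" "d < 1"
    using e by (simp_all add: d_def field_simps)
  have "(\<lambda>n. (1 - d)^n) \<longlonglongrightarrow> 0"
    using d by (intro LIMSEQ_power_zero) simp
  moreover have "0 < e^(k-1)"
    using e(1) by (rule zero_less_power)
  ultimately have "\<forall>\<^sub>F n in sequentially. (1 - d)^n < e^(k-1)"
    by (rule order_tendstoD)
  then obtain N where N: "\<And>n. N \<le> n \<Longrightarrow> (1 - d)^n < e^(k-1)"
    by (auto simp: eventually_sequentially)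
  show "\<forall>\<^sub>F n in sequentially. xi n ^ (n-1) < a"
    using eventually_gt_at_top[of "max k N"]
  proof eventually_elim
    case (elim n)
    define y where "y = xi n ^ (n-1)"
    have root: "0 < xi n" "xi n < 1" "P_poly n k (xi n) = Q_poly n k (xi n)"
      using roots elim by auto
    have "y < 1"
      using root elim assms(1) by (simp add: y_def power_less_one_iff)
    show ?case
    proof (rule ccontr)
      assume "\<not> xi n ^ (n-1) < a"
      then have "e \<le> y"
        using e by (simp add: y_def)
      have "e^(k-1) \<le> y^(k-1)"
        using \<open>e \<le> y\<close> e by (simp add: power_mono)
      also have "\<dots> \<le> (1 - y^3 / (4 * real (k+1)))^(n-1)"
        using root_power_bound[OF assms(1) _ root] elim by (simp add: y_def)
      also have "\<dots> \<le> (1 - d)^(n-1)"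
      proof (rule power_mono)
        have "e^3 \<le> y^3"
          using \<open>e \<le> y\<close> e by (simp add: power_mono)
        then show "1 - y^3 / (4 * real (k+1)) \<le> 1 - d"
          by (simp add: d_def divide_right_mono)
        have "y^3 \<le> 1"
          using \<open>y < 1\<close> root by (simp add: y_def power_le_one)
        then show "0 \<le> 1 - y^3 / (4 * real (k+1))"
          by (simp add: field_simps)
      qed
      also have "\<dots> < e^(k-1)"
        using N[of "n-1"] elim by auto
      finally show False
        by simp
    qed
  qed
qed

theorem lemma5p6:
  fixes k :: nat and xi :: "nat \<Rightarrow> real" and np :: "nat \<Rightarrow> nat"
  assumes hk: "k \<ge> 2"
    and hxi: "\<And>n. n > k \<Longrightarrow> 0 < xi n \<and> xi n < 1 \<and> P_poly n k (xi n) = Q_poly n k (xi n)"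
    and hmono: "strict_mono np"
    and hnp: "\<And>p. np p > k"
    and hlim: "(\<lambda>p. ereal (xi (np p) ^ (np p - 1))) \<longlonglongrightarrow>
                 limsup (\<lambda>n. ereal (xi n ^ (n - 1)))"
  shows "(\<lambda>p. C_const (np p) k (xi (np p))) \<longlonglongrightarrow> 12 / real k"
proof -
  let ?y = "\<lambda>p. xi (np p) ^ (np p - 1)"
  have "?y \<longlonglongrightarrow> 0"
    using LIMSEQ_subseq_LIMSEQ[OF root_power_tendsto_zero[OF hk hxi] hmono]
    by (simp add: o_def)
  moreover have "\<And>p. ?y p \<noteq> 0"
    using hxi[OF hnp] by (simp add: less_imp_neq[symmetric])
  ultimately have y_at_0: "filterlim ?y (at 0) sequentially"
    by (simp add: filterlim_at)
  have "(\<lambda>p. C_profile k (?y p)) \<longlonglongrightarrow> 12 / real k"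
    using filterlim_compose[OF C_profile_limit y_at_0] hk by simp
  moreover have "\<And>p. C_const (np p) k (xi (np p)) = C_profile k (?y p)"
    using hxi[OF hnp] hnp by (simp add: C_const_eq_profile)
  ultimately show ?thesis
    by simp
qed

end
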